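(* Let $\mathcal{S}=(S,\boldsymbol{\tau})$ be a species tree on $X=\{x_1,\ldots,x_n\}$ with height $\eta=\tau_0+\cdots+\tau_{n-2}$, let $h$ be a gene tree history evolving within $\mathcal{S}$ (with given coalescent times), and let $0<\eta'\le\eta$. Let $h^{\mathit{top}}_{\mathit{ext}}$ be the extended top part of $h$ concerning cut height $\eta'$ and let $h^1,\ldots,h^k$ be the chopped parts of $h$ concerning cut height $\eta'$. Then for each $x_i\in X$, $$FP_h(x_i) = FP_{h^i}(x_i) + FP_{h^{\mathit{top}}_{\mathit{ext}}}(v_{x_i}),$$ where $h^i$ is the chopped part containing $x_i$ (whose root may have out-degree $1$) and $v_{x_i}$ is any one of the newly attached leaves of $h^{\mathit{top}}_{\mathit{ext}}$ whose parent is an ancestor of $x_i$ in $h$.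
   Context: A species tree $\mathcal{S}=(S,\boldsymbol{\tau})$ on $X$ is a rooted binary phylogenetic tree $S$ with leaf set $X$ and positive interval lengths $\tau_0,\dots,\tau_{n-2}$ between successive speciation events ($\tau_0$ from the leaves at time $0$ to the first speciation), so it is ultrametric with height $\eta=\tau_0+\cdots+\tau_{n-2}$. A gene tree history $h$ evolving within $\mathcal{S}$ is an ultrametric rooted binary tree with leaf set $X$ (leaves at time $0$) whose internal vertices are coalescent events placed at specific times within populations (branches) of $\mathcal{S}$ or above its root; its edge lengths are given by these times, and its root lies above height $\eta$. Cutting $h$ at height $\eta'$: every edge of $h$ present at time $\eta'$ is subdivided into two edges at that time, disconnecting $h$; if an internal vertex $v$ of $h$ lies exactly at time $\eta'$, it is split into two copies, one being the root of the subtree with the outgoing (descendant) edges and the other a new leaf on the incoming edge. This yields a forest; the tree containing the root of $h$ is the top part $h^{\mathit{top}}$, and the other trees $h^1,\dots,h^k$ are the chopped parts. The extended top part $h^{\mathit{top}}_{\mathit{ext}}$ is obtained from $h^{\mathit{top}}$ by attaching to each leaf $\ell$ of $h^{\mathit{top}}$, via edges of length $0$, as many new leaves as $\ell$ had descendant leaves in $h$ (the result may be non-binary and contain degree-2 vertices). For a rooted tree $T$ with root $\rho$ and nonnegative edge lengths $l(e)$, the Fair Proportion index is $FP_T(x)=\sum_{e\in P(T;\rho,x)} l(e)/n(e)$, where $P(T;\rho,x)$ is the path from $\rho$ to leaf $x$ and $n(e)$ is the number of leaves of $T$ descending from $e$. *)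

theory Defs
  imports Main "HOL.Real"
begin

text \<open>Ultrametric rooted trees given by vertex times: a leaf sits at time 0,
  an internal vertex carries its time (height) and the list of its children.
  Edge lengths are differences of times.\<close>
datatype 'a htree = HLeaf 'a | HNode real "'a htree list"

text \<open>Rooted trees with explicit nonnegative edge lengths (arbitrary out-degree).\<close>
datatype 'a wtree = Leaf 'a | Node "(real \<times> 'a wtree) list"

fun htime :: "'a htree \<Rightarrow> real" where
  "htime (HLeaf a) = 0"
| "htime (HNode t cs) = t"

fun hleaves :: "'a htree \<Rightarrow> 'a list" where
  "hleaves (HLeaf a) = [a]"
| "hleaves (HNode t cs) = concat (map hleaves cs)"

fun hsubtrees :: "'a htree \<Rightarrow> 'a htree set" where
  "hsubtrees (HLeaf a) = {HLeaf a}"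
| "hsubtrees (HNode t cs) = insert (HNode t cs) (\<Union>c\<in>set cs. hsubtrees c)"

definition hinternal :: "'a htree \<Rightarrow> bool" where
  "hinternal v \<longleftrightarrow> (\<exists>t cs. v = HNode t cs)"

fun ultrametric_binary :: "'a htree \<Rightarrow> bool" where
  "ultrametric_binary (HLeaf a) = True"
| "ultrametric_binary (HNode t cs) =
     (length cs = 2 \<and> (\<forall>c\<in>set cs. htime c < t \<and> ultrametric_binary c))"

text \<open>Species tree on X: rooted binary phylogenetic tree with leaf set X, ultrametric,
  speciation events at pairwise distinct times (so the successive interval lengths
  tau_0, ..., tau_(n-2) are positive); its height eta is the time of its root.\<close>
definition species_tree :: "'a set \<Rightarrow> 'a htree \<Rightarrow> bool" where
  "species_tree X S \<longleftrightarrow> ultrametric_binary S \<and> distinct (hleaves S) \<and> set (hleaves S) = X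
     \<and> inj_on htime {s \<in> hsubtrees S. hinternal s}"

text \<open>Gene tree history evolving within species tree S: ultrametric binary tree with
  leaf set X; every coalescent event v happens in a population of S, i.e. not earlier
  than the speciation event (MRCA in S) joining the species below v; its root lies
  above the root of S.\<close>
definition gene_tree_history :: "'a htree \<Rightarrow> 'a set \<Rightarrow> 'a htree \<Rightarrow> bool" where
  "gene_tree_history S X h \<longleftrightarrow> ultrametric_binary h \<and> distinct (hleaves h) \<and> set (hleaves h) = X
     \<and> (\<forall>v\<in>hsubtrees h. hinternal v \<longrightarrow>
          (\<exists>s\<in>hsubtrees S. set (hleaves v) \<subseteq> set (hleaves s) \<and> htime s \<le> htime v))
     \<and> htime S < htime h"

fun to_w :: "'a htree \<Rightarrow> 'a wtree" where
  "to_w (HLeaf a) = Leaf a"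
| "to_w (HNode t cs) = Node (map (\<lambda>c. (t - htime c, to_w c)) cs)"

fun wleaves :: "'a wtree \<Rightarrow> 'a list" where
  "wleaves (Leaf a) = [a]"
| "wleaves (Node cs) = concat (map (\<lambda>p. wleaves (snd p)) cs)"

fun FP :: "'a wtree \<Rightarrow> 'a \<Rightarrow> real" where
  "FP (Leaf a) x = 0"
| "FP (Node cs) x = sum_list (map (\<lambda>p. if x \<in> set (wleaves (snd p))
       then fst p / real (length (wleaves (snd p))) + FP (snd p) x else 0) cs)"

text \<open>Chopped parts when cutting at height e (applied to a tree whose root is above e).\<close>
fun chopped :: "real \<Rightarrow> 'a htree \<Rightarrow> 'a wtree list" where
  "chopped e (HLeaf a) = []"
| "chopped e (HNode t cs) = concat (map (\<lambda>c.
      if e < htime c then chopped e c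
      else if htime c = e then [to_w c]
      else [Node [(e - htime c, to_w c)]]) cs)"

text \<open>Extended top part when cutting at height e: every edge reaching time e ends in a
  new leaf at time e, to which new leaves are attached by edges of length 0, one for
  each leaf of h below it; these new leaves are labelled by those descendant leaves.\<close>
fun ext_top :: "real \<Rightarrow> 'a htree \<Rightarrow> 'a wtree" where
  "ext_top e (HLeaf a) = Leaf a"
| "ext_top e (HNode t cs) = Node (map (\<lambda>c.
      if e < htime c then (t - htime c, ext_top e c)
      else (t - e, Node (map (\<lambda>y. (0, Leaf y)) (hleaves c)))) cs)"

end

theory Submission
  imports Defs
begin

text \<open>Every leaf x lies below exactly one edge leaving each vertex on its root path, so
  FP(x) splits at the cut into the contributions of the edges below and above height e.
  Below the cut they are those of the chopped part containing x, an edge crossing the cut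
  being split into a lower piece (the new out-degree-1 root edge of that part) and an upper
  piece. Above the cut they are those of the extended top part at any new leaf y attached
  below the same cut edge: the path to y passes through the same edges with the same
  leaf counts, and ends with an edge of length 0.\<close>

lemma wleaves_to_w [simp]: "wleaves (to_w T) = hleaves T"
  by (induction T) (auto simp: o_def intro!: arg_cong[where f = concat])

lemma wleaves_ext_top [simp]: "wleaves (ext_top e T) = hleaves T"
  by (induction T) (auto simp: o_def intro!: arg_cong[where f = concat])

lemma set_wleaves_chopped_subset:
  "p \<in> set (chopped e T) \<Longrightarrow> set (wleaves p) \<subseteq> set (hleaves T)"
  by (induction T arbitrary: p) (fastforce split: if_splits)+

lemma ex_chopped_part_containing_leaf:
  assumes "0 \<le> e" and "e < htime T" and "x \<in> set (hleaves T)"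
  shows "\<exists>p\<in>set (chopped e T). x \<in> set (wleaves p)"
  using assms
proof (induction T)
  case (HNode t cs)
  then obtain c where c: "c \<in> set cs" "x \<in> set (hleaves c)" by auto
  show ?case
  proof (cases "e < htime c")
    case True
    with HNode c obtain p where "p \<in> set (chopped e c)" "x \<in> set (wleaves p)" by auto
    with c True show ?thesis by force
  next
    case False
    with c show ?thesis by (cases "htime c = e") force+
  qed
qed simp

lemma sum_list_if_mem_distinct_concat:
  fixes g :: "'b \<Rightarrow> 'c::comm_monoid_add"
  assumes "distinct (concat (map L cs))" and "c \<in> set cs" and "x \<in> set (L c)"
  shows "(\<Sum>p\<leftarrow>cs. if x \<in> set (L p) then g p else 0) = g c"
  using assms
proof (induction cs)
  case (Cons a cs)
  show ?case
  proof (cases "a = c")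
    case True
    with Cons.prems have "\<forall>p\<in>set cs. x \<notin> set (L p)" by auto
    then have "(\<Sum>p\<leftarrow>cs. if x \<in> set (L p) then g p else 0) = 0"
      by (induction cs) auto
    with True Cons.prems show ?thesis by simp
  next
    case False
    with Cons.prems have "c \<in> set cs" "x \<notin> set (L a)" by auto
    with Cons False show ?thesis by simp
  qed
qed simp

lemma FP_Node_child:
  assumes "distinct (wleaves (Node cs))" and "(l, c) \<in> set cs" and "x \<in> set (wleaves c)"
  shows "FP (Node cs) x = l / real (length (wleaves c)) + FP c x"
  using sum_list_if_mem_distinct_concat[of "\<lambda>p. wleaves (snd p)" cs "(l, c)" x
      "\<lambda>p. fst p / real (length (wleaves (snd p))) + FP (snd p) x"] assms
  by (simp add: o_def)

lemma wleaves_Node_zero_edges_to_leaves: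
  "wleaves (Node (map (\<lambda>z. (0, Leaf z)) zs)) = zs"
  by (induction zs) auto

lemma FP_Node_zero_edges_to_leaves:
  "FP (Node (map (\<lambda>z. (0, Leaf z)) zs)) y = 0"
  by (induction zs) auto

lemma FP_to_w_HNode:
  assumes "distinct (hleaves (HNode t cs))" and "c \<in> set cs" and "x \<in> set (hleaves c)"
  shows "FP (to_w (HNode t cs)) x = (t - htime c) / real (length (hleaves c)) + FP (to_w c) x"
proof -
  have "distinct (wleaves (to_w (HNode t cs)))"
    using assms(1) by (simp only: wleaves_to_w)
  then show ?thesis unfolding to_w.simps
    by (subst FP_Node_child[of _ _ "to_w c"]) (use assms(2,3) in auto)
qed

lemma FP_ext_top_HNode:
  assumes "distinct (hleaves (HNode t cs))" and "c \<in> set cs" and "y \<in> set (hleaves c)"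
  shows "FP (ext_top e (HNode t cs)) y =
    (if e < htime c then (t - htime c) / real (length (hleaves c)) + FP (ext_top e c) y
     else (t - e) / real (length (hleaves c)))"
proof -
  have dist: "distinct (wleaves (ext_top e (HNode t cs)))"
    using assms(1) by (simp only: wleaves_ext_top)
  show ?thesis
  proof (cases "e < htime c")
    case True
    with dist show ?thesis unfolding ext_top.simps
      by (subst FP_Node_child[of _ _ "ext_top e c"]) (use assms(2,3) in auto)
  next
    case False
    define star where "star = Node (map (\<lambda>z. (0::real, Leaf z)) (hleaves c))"
    have "FP (ext_top e (HNode t cs)) y = (t - e) / real (length (wleaves star)) + FP star y"
      unfolding ext_top.simps
      by (rule FP_Node_child) (use dist assms(2,3) False in \<open>auto simp: star_def\<close>)
    with False show ?thesis
      by (simp only: star_def wleaves_Node_zero_edges_to_leaves FP_Node_zero_edges_to_leaves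
          if_False add_0_right)
  qed
qed

lemma FP_to_w_eq_FP_chopped_plus_FP_ext_top:
  assumes "distinct (hleaves T)" and "e < htime T" and "p \<in> set (chopped e T)"
    and "x \<in> set (wleaves p)" and "y \<in> set (wleaves p)"
  shows "FP (to_w T) x = FP p x + FP (ext_top e T) y"
  using assms
proof (induction T arbitrary: p)
  case (HNode t cs)
  from HNode.prems(3) obtain c where c: "c \<in> set cs" and pc: "p \<in> set
      (if e < htime c then chopped e c
       else if htime c = e then [to_w c] else [Node [(e - htime c, to_w c)]])"
    by auto
  have x: "x \<in> set (hleaves c)" and y: "y \<in> set (hleaves c)"
    using pc HNode.prems(4,5) set_wleaves_chopped_subset[of p e c] by (auto split: if_splits)
  note FP_to_w = FP_to_w_HNode[OF HNode.prems(1) c x]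
  note FP_ext_top = FP_ext_top_HNode[OF HNode.prems(1) c y, of e]
  consider (above) "e < htime c" | (at) "htime c = e" | (below) "htime c < e"
    by fastforce
  then show ?case
  proof cases
    case above
    have "distinct (hleaves c)"
      using HNode.prems(1) c by (simp add: distinct_concat_iff)
    with above have "FP (to_w c) x = FP p x + FP (ext_top e c) y"
      using HNode.IH[OF c] pc HNode.prems(4,5) by simp
    with above show ?thesis using FP_to_w FP_ext_top by simp
  next
    case at
    then show ?thesis using FP_to_w FP_ext_top pc by simp
  next
    case below
    then have "FP p x = (e - htime c) / real (length (hleaves c)) + FP (to_w c) x"
      using pc x by simp
    with below show ?thesis using FP_to_w FP_ext_top by (simp add: diff_divide_distrib)
  qed
qed simp

theorem lemma1:
  fixes X :: "'a set" and S h :: "'a htree" and \<eta>' :: real and x :: 'a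
  assumes "species_tree X S"
    and "gene_tree_history S X h"
    and "0 < \<eta>'" and "\<eta>' \<le> htime S"
    and "x \<in> X"
  shows "(\<exists>p\<in>set (chopped \<eta>' h). x \<in> set (wleaves p))
       \<and> (\<forall>p\<in>set (chopped \<eta>' h). x \<in> set (wleaves p) \<longrightarrow>
            (\<forall>y\<in>set (wleaves p). FP (to_w h) x = FP p x + FP (ext_top \<eta>' h) y))"
proof -
  have h: "distinct (hleaves h)" "set (hleaves h) = X" "htime S < htime h"
    using assms(2) unfolding gene_tree_history_def by auto
  with assms(4) have cut_below_root: "\<eta>' < htime h" by simp
  show ?thesis
    using ex_chopped_part_containing_leaf[of \<eta>' h x] assms(3,5) h(2) cut_below_root
      FP_to_w_eq_FP_chopped_plus_FP_ext_top[OF h(1) cut_below_root]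
    by auto
qed

end
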